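(* Let $X\in\mathbb{R}^{N_1\times N_2}$ be $k$-sparse. For $j\in\{1,2\}$ let $U_j\in\mathbb{R}^{m_j\times N_j}$ satisfy the NSP$_k$ property, and let $Y=U_1XU_2^T$. Let $K=\operatorname{rank}(Y)$ and let $Y=\sum_{i=1}^K b_i^{(1)}(b_i^{(2)})^T$ be any rank decomposition of $Y$ (e.g. from the SVD), with $b_i^{(1)}\in\mathbb{R}^{m_1}$, $b_i^{(2)}\in\mathbb{R}^{m_2}$. For $i\in[K]$, $j\in\{1,2\}$ consider $$\hat w_i^{(j)}=\arg\min_{w\in\mathbb{R}^{N_j}}\|w\|_1\quad\text{s.t.}\quad b_i^{(j)}=U_jw.$$ Then each of these problems has a unique solution $\hat w_i^{(j)}$, which is $k$-sparse, and $$X=\sum_{i=1}^K\hat w_i^{(1)}(\hat w_i^{(2)})^T.$$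
   Context: A vector or matrix is $k$-sparse if it has at most $k$ nonzero entries. $[n]=\{1,\dots,n\}$. For $w\in\mathbb{R}^N$ and $S\subset[N]$, $\|w_S\|_1=\sum_{i\in S}|w_i|$ and $S^c=[N]\setminus S$. A matrix $A\in\mathbb{R}^{m\times N}$ satisfies the null space property of order $k$ (NSP$_k$) if for every $w\neq 0$ with $Aw=0$ and every $S\subset[N]$ with $|S|=k$ one has $\|w_S\|_1<\|w_{S^c}\|_1$. A rank decomposition of a matrix $Y$ of rank $K$ is an expression $Y=\sum_{i=1}^K b_i^{(1)}(b_i^{(2)})^T$ with exactly $K$ terms. *)

theory Defs
  imports "HOL-Analysis.Analysis"
begin

definition vec_sparse :: "nat \<Rightarrow> real^'n \<Rightarrow> bool" where
  "vec_sparse k x \<longleftrightarrow> card {i. x $ i \<noteq> 0} \<le> k"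

definition mat_sparse :: "nat \<Rightarrow> real^'n^'m \<Rightarrow> bool" where
  "mat_sparse k X \<longleftrightarrow> card {(i, j). X $ i $ j \<noteq> 0} \<le> k"

definition l1_on :: "'n set \<Rightarrow> real^'n \<Rightarrow> real" where
  "l1_on S w = (\<Sum>i\<in>S. \<bar>w $ i\<bar>)"

definition l1 :: "real^'n \<Rightarrow> real" where
  "l1 w = l1_on UNIV w"

definition NSP :: "nat \<Rightarrow> real^'n^'m \<Rightarrow> bool" where
  "NSP k A \<longleftrightarrow> (\<forall>w. w \<noteq> 0 \<and> A *v w = 0 \<longrightarrow>
      (\<forall>S. card S \<le> k \<longrightarrow> l1_on S w < l1_on (- S) w))"

definition l1_argmin :: "real^'n^'m \<Rightarrow> real^'m \<Rightarrow> real^'n \<Rightarrow> bool" where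
  "l1_argmin U b w \<longleftrightarrow> U *v w = b \<and> (\<forall>v. U *v v = b \<longrightarrow> l1 w \<le> l1 v)"

definition outer :: "real^'m \<Rightarrow> real^'n \<Rightarrow> real^'n^'m" where
  "outer u v = (\<chi> r c. u $ r * v $ c)"

end

theory Submission
  imports Defs
begin

text \<open>
  Let \<open>R\<close> and \<open>C\<close> be the sets of nonzero rows and columns of \<open>X\<close>; each has at most
  \<open>k\<close> elements. As \<open>rank Y = K\<close>, the \<open>K\<close> vectors \<open>b1 i\<close> span the column space of
  \<open>Y = U1 (X U2\<^sup>T)\<close>, so each \<open>b1 i\<close> is \<open>U1 w\<close> for some \<open>w\<close> supported in \<open>R\<close>, and the null
  space property makes such a \<open>w\<close> the unique \<open>l1\<close>-minimiser. Transposing \<open>Y\<close> gives the same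
  for \<open>b2 i\<close> with \<open>C\<close> and \<open>U2\<close>. Finally \<open>X\<close> and \<open>\<Sum>i<K. outer (w1 i) (w2 i)\<close> are both
  supported in \<open>R \<times> C\<close> and have the same image under \<open>Z \<mapsto> U1 Z U2\<^sup>T\<close>, which is injective on
  such matrices because the null space property makes \<open>U1\<close> and \<open>U2\<close> injective on vectors
  supported in at most \<open>k\<close> coordinates.
\<close>

definition row_support :: "'a::zero^'n^'m \<Rightarrow> 'm set" where
  "row_support A = {i. \<exists>j. A $ i $ j \<noteq> 0}"

lemma not_in_row_support: "i \<notin> row_support A \<Longrightarrow> A $ i $ j = 0"
  by (simp add: row_support_def)

lemma card_row_support_le:
  assumes "mat_sparse k X"
  shows "card (row_support X) \<le> k"
proof -
  have "row_support X \<subseteq> fst ` {(i, j). X $ i $ j \<noteq> 0}"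
    unfolding row_support_def by (auto intro: image_eqI[where x = "(_, _)"])
  then have "card (row_support X) \<le> card {(i, j). X $ i $ j \<noteq> 0}"
    using card_mono[OF finite] card_image_le[OF finite] order_trans by blast
  then show ?thesis
    using assms by (simp add: mat_sparse_def)
qed

lemma mat_sparse_transpose: "mat_sparse k (transpose X) \<longleftrightarrow> mat_sparse k X"
proof -
  let ?P = "{(i, j). X $ i $ j \<noteq> 0}"
  have "card {(i, j). transpose X $ i $ j \<noteq> 0} = card (prod.swap -` ?P)"
    by (rule arg_cong[of _ _ card]) (auto simp: transpose_def)
  also have "\<dots> = card ?P"
    by (rule card_vimage_inj) auto
  finally show ?thesis
    by (simp add: mat_sparse_def)
qed

lemma matrix_vector_mult_row_support:
  "i \<notin> row_support A \<Longrightarrow> (A *v x) $ i = 0"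
  by (simp add: matrix_vector_mult_def not_in_row_support)

lemma row_support_matrix_mult: "row_support (A ** B) \<subseteq> row_support A"
proof
  fix i assume i: "i \<in> row_support (A ** B)"
  show "i \<in> row_support A"
  proof (rule ccontr)
    assume "i \<notin> row_support A"
    then have "(A ** B) $ i $ j = 0" for j
      by (simp add: matrix_matrix_mult_def not_in_row_support)
    then show False
      using i by (simp add: row_support_def)
  qed
qed

lemma column_matrix_mult: "column j (A ** B) = A *v column j B"
  by (simp add: vec_eq_iff column_def matrix_vector_mult_def matrix_matrix_mult_def)

lemma outer_sum_mult_vector:
  "(\<Sum>i<K. outer (b i) (c i)) *v x = (\<Sum>i<K. (c i \<bullet> x) *\<^sub>R b i)"
  by (simp add: vec_eq_iff matrix_vector_mult_def outer_def sum_component inner_vec_def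
        sum_distrib_left sum_distrib_right mult_ac) (intro allI sum.swap)

lemma matrix_add_rdistrib: "(B + C) ** A = B ** A + C ** A"
  by (vector matrix_matrix_mult_def sum.distrib[symmetric] field_simps)

lemma matrix_mult_outer:
  fixes U :: "real^'n^'m" and V :: "real^'p^'q"
  shows "U ** outer u v ** transpose V = outer (U *v u) (V *v v)"
  by (simp add: vec_eq_iff matrix_matrix_mult_def outer_def transpose_def matrix_vector_mult_def
      sum_distrib_left sum_distrib_right mult_ac)

lemma matrix_mult_outer_sum:
  fixes U :: "real^'n^'m" and V :: "real^'p^'q"
  shows "U ** (\<Sum>i<(K::nat). outer (u i) (v i)) ** transpose V = (\<Sum>i<K. outer (U *v u i) (V *v v i))"
  by (induction K) (simp_all add: matrix_add_ldistrib matrix_add_rdistrib matrix_mult_outer)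

lemma transpose_outer_sum:
  "transpose (\<Sum>i<K. outer (u i) (v i)) = (\<Sum>i<K. outer (v i) (u i))"
  by (simp add: vec_eq_iff transpose_def outer_def sum_component mult.commute)

lemma matrix_mult_outer_sum_preimages:
  fixes U :: "real^'n^'m" and V :: "real^'p^'q"
  assumes "\<forall>i<(K::nat). U *v u i = b i" "\<forall>i<K. V *v v i = c i"
  shows "U ** (\<Sum>i<K. outer (u i) (v i)) ** transpose V = (\<Sum>i<K. outer (b i) (c i))"
  unfolding matrix_mult_outer_sum using assms by (intro sum.cong) auto

lemma rank_decomposition_transpose:
  assumes "rank (U ** X ** transpose V) = K"
    and "U ** X ** transpose V = (\<Sum>i<K. outer (b i) (c i))"
  shows "rank (V ** transpose X ** transpose U) = K"
    and "V ** transpose X ** transpose U = (\<Sum>i<K. outer (c i) (b i))"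
proof -
  have transpose: "V ** transpose X ** transpose U = transpose (U ** X ** transpose V)"
    by (simp add: matrix_transpose_mul matrix_mul_assoc)
  show "rank (V ** transpose X ** transpose U) = K"
    unfolding transpose rank_transpose by (rule assms(1))
  show "V ** transpose X ** transpose U = (\<Sum>i<K. outer (c i) (b i))"
    unfolding transpose assms(2) by (rule transpose_outer_sum)
qed

text \<open>In a decomposition into exactly \<open>rank A\<close> outer products the left factors span the
  column space, since they span a space containing it of dimension at most \<open>rank A\<close>.\<close>
lemma rank_decomposition_in_range:
  fixes A :: "real^'n^'m"
  assumes "rank A = K" "A = (\<Sum>i<K. outer (b i) (c i))" "j < K"
  shows "b j \<in> range ((*v) A)"
proof -
  let ?V = "range ((*v) A)" and ?B = "span (b ` {..<K})"
  have "?V \<subseteq> ?B"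
  proof
    fix y assume "y \<in> ?V"
    then obtain x where "y = A *v x" by auto
    then have y: "y = (\<Sum>i<K. (c i \<bullet> x) *\<^sub>R b i)"
      using assms(2) outer_sum_mult_vector by simp
    have "(\<Sum>i<K. (c i \<bullet> x) *\<^sub>R b i) \<in> ?B"
      by (rule span_sum) (intro span_scale span_base imageI)
    then show "y \<in> ?B" unfolding y .
  qed
  moreover have "dim ?B \<le> dim ?V"
  proof -
    have "dim ?B \<le> card (b ` {..<K})" by (rule dim_le_card) auto
    also have "\<dots> \<le> K" using card_image_le[of "{..<K}" b] by simp
    finally show ?thesis using assms(1) rank_dim_range by metis
  qed
  moreover have "subspace ?V"
    using linear_subspace_image[OF matrix_vector_mul_linear[of A] subspace_UNIV] by simp
  ultimately have "?V = ?B" using subspace_dim_equal subspace_span by blast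
  then show ?thesis using assms(3) by (simp add: span_base)
qed

lemma rank_decomposition_row_supported_preimages:
  fixes U :: "real^'n^'m" and X :: "real^'p^'n" and V :: "real^'p^'q"
  assumes "rank (U ** X ** transpose V) = K"
    and "U ** X ** transpose V = (\<Sum>i<K. outer (b i) (c i))"
  shows "\<exists>w. \<forall>j<K. (\<forall>r. r \<notin> row_support X \<longrightarrow> w j $ r = 0) \<and> U *v w j = b j"
proof -
  have "\<exists>w. (\<forall>r. r \<notin> row_support X \<longrightarrow> w $ r = 0) \<and> U *v w = b j" if j: "j < K" for j
  proof -
    obtain x where "b j = (U ** X ** transpose V) *v x"
      using rank_decomposition_in_range[OF assms j] by blast
    then have "U *v (X *v (transpose V *v x)) = b j"
      by (simp only: matrix_vector_mul_assoc matrix_mul_assoc)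
    then show ?thesis
      using matrix_vector_mult_row_support by blast
  qed
  then have "\<forall>j. \<exists>w. j < K \<longrightarrow> (\<forall>r. r \<notin> row_support X \<longrightarrow> w $ r = 0) \<and> U *v w = b j"
    by blast
  then show ?thesis by (rule choice)
qed

lemma row_support_outer_sum:
  assumes "\<And>i r. i < K \<Longrightarrow> r \<notin> R \<Longrightarrow> u i $ r = 0"
  shows "row_support (\<Sum>i<K. outer (u i) (v i)) \<subseteq> R"
proof
  fix r assume "r \<in> row_support (\<Sum>i<K. outer (u i) (v i))"
  show "r \<in> R"
  proof (rule ccontr)
    assume "r \<notin> R"
    then have "(\<Sum>i<K. outer (u i) (v i)) $ r $ j = 0" for j
      using assms by (simp add: outer_def sum_component)
    then show False
      using \<open>r \<in> row_support _\<close> by (simp add: row_support_def)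
  qed
qed

lemma l1_split: "l1 w = l1_on S w + l1_on (- S) w"
proof -
  have "(UNIV :: 'a set) = S \<union> - S" by auto
  then have "l1 w = (\<Sum>i\<in>S \<union> - S. \<bar>w $ i\<bar>)"
    unfolding l1_def l1_on_def by simp
  also have "\<dots> = l1_on S w + l1_on (- S) w"
    unfolding l1_on_def by (rule sum.union_disjoint) auto
  finally show ?thesis .
qed

lemma l1_on_nonneg: "0 \<le> l1_on S w"
  unfolding l1_on_def by (simp add: sum_nonneg)

lemma l1_on_eq_0: "(\<And>i. i \<in> S \<Longrightarrow> w $ i = 0) \<Longrightarrow> l1_on S w = 0"
  unfolding l1_on_def by simp

lemma l1_on_triangle: "l1_on S w \<le> l1_on S v + l1_on S (v - w)"
  unfolding l1_on_def sum.distrib[symmetric] by (intro sum_mono) auto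

lemma NSP_kernelD:
  assumes "NSP k U" "card S \<le> k" "h \<noteq> 0" "U *v h = 0"
  shows "l1_on S h < l1_on (- S) h"
  using assms unfolding NSP_def by blast

lemma NSP_sparse_l1_less:
  fixes U :: "real^'n^'m"
  assumes nsp: "NSP k U" and S: "card S \<le> k" and supp: "\<And>i. i \<notin> S \<Longrightarrow> w $ i = 0"
    and "U *v v = U *v w" "v \<noteq> w"
  shows "l1 w < l1 v"
proof -
  let ?h = "v - w"
  have "l1_on S ?h < l1_on (- S) ?h"
    using assms by (intro NSP_kernelD[OF nsp S]) (auto simp: matrix_vector_mult_diff_distrib)
  moreover have "l1_on (- S) ?h = l1_on (- S) v"
    unfolding l1_on_def using supp by (intro sum.cong) auto
  moreover have "l1_on (- S) w = 0"
    using supp by (intro l1_on_eq_0) auto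
  ultimately show ?thesis
    using l1_on_triangle[of S w v] l1_split[of w S] l1_split[of v S] by linarith
qed

theorem NSP_sparse_unique_l1_argmin:
  fixes U :: "real^'n^'m"
  assumes "NSP k U" "card S \<le> k" "\<And>i. i \<notin> S \<Longrightarrow> w $ i = 0"
  shows "l1_argmin U (U *v w) w \<and> (\<forall>v. l1_argmin U (U *v w) v \<longrightarrow> v = w)"
  using NSP_sparse_l1_less[OF assms] unfolding l1_argmin_def
  by (metis order.strict_iff_not order.refl)

lemma vec_sparse_if_support_subset:
  assumes "card S \<le> k" "\<And>i. i \<notin> S \<Longrightarrow> w $ i = 0"
  shows "vec_sparse k w"
proof -
  have "card {i. w $ i \<noteq> 0} \<le> card S"
    using assms(2) by (intro card_mono) auto
  then show ?thesis unfolding vec_sparse_def using assms(1) by simp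
qed

corollary NSP_sparse_recovery:
  fixes U :: "real^'n^'m"
  assumes "NSP k U" "card S \<le> k" "\<forall>i. i \<notin> S \<longrightarrow> w $ i = 0" "U *v w = b"
  shows "l1_argmin U b w \<and> (\<forall>v. l1_argmin U b v \<longrightarrow> v = w) \<and> vec_sparse k w"
  using NSP_sparse_unique_l1_argmin[of k U S w] vec_sparse_if_support_subset[of S k w] assms
  by blast

lemma NSP_sparse_inj:
  fixes U :: "real^'n^'m"
  assumes nsp: "NSP k U" and S: "card S \<le> k"
    and "\<And>i. i \<notin> S \<Longrightarrow> v $ i = 0" "\<And>i. i \<notin> S \<Longrightarrow> w $ i = 0"
    and "U *v v = U *v w"
  shows "v = w"
proof (rule ccontr)
  assume "v \<noteq> w"
  then have "l1_on S (v - w) < l1_on (- S) (v - w)"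
    using assms by (intro NSP_kernelD[OF nsp S]) (auto simp: matrix_vector_mult_diff_distrib)
  moreover have "l1_on (- S) (v - w) = 0"
    using assms by (intro l1_on_eq_0) auto
  ultimately show False using l1_on_nonneg[of S "v - w"] by linarith
qed

lemma NSP_matrix_mult_cancel:
  fixes U :: "real^'n^'m" and A B :: "real^'p^'n"
  assumes nsp: "NSP k U" and S: "card S \<le> k"
    and "row_support A \<subseteq> S" "row_support B \<subseteq> S" and "U ** A = U ** B"
  shows "A = B"
proof -
  have "column j A = column j B" for j
  proof (rule NSP_sparse_inj[OF nsp S])
    show "U *v column j A = U *v column j B"
      by (metis column_matrix_mult assms(5))
  qed (use assms(3,4) in \<open>auto simp: column_def intro!: not_in_row_support\<close>)
  then show ?thesis by (simp add: vec_eq_iff column_def)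
qed

lemma NSP_sandwich_cancel:
  fixes U :: "real^'n^'m" and V :: "real^'p^'q" and A B :: "real^'p^'n"
  assumes "NSP k U" "NSP k V" "card R \<le> k" "card C \<le> k"
    and "row_support A \<subseteq> R" "row_support B \<subseteq> R"
    and "row_support (transpose A) \<subseteq> C" "row_support (transpose B) \<subseteq> C"
    and "U ** A ** transpose V = U ** B ** transpose V"
  shows "A = B"
proof -
  have "row_support (A ** transpose V) \<subseteq> R" "row_support (B ** transpose V) \<subseteq> R"
    using assms(5,6) row_support_matrix_mult by blast+
  then have "A ** transpose V = B ** transpose V"
    using assms(9) by (intro NSP_matrix_mult_cancel[OF assms(1,3)]) (simp_all add: matrix_mul_assoc)
  then have "V ** transpose A = V ** transpose B"
    by (metis matrix_transpose_mul transpose_transpose)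
  then show ?thesis
    using NSP_matrix_mult_cancel[OF assms(2,4,7,8)] by simp
qed

theorem mainTheorem3:
  fixes X :: "real^'N2^'N1"
    and U1 :: "real^'N1^'m1" and U2 :: "real^'N2^'m2"
    and b1 :: "nat \<Rightarrow> real^'m1" and b2 :: "nat \<Rightarrow> real^'m2"
    and k K :: nat
  assumes "mat_sparse k X"
    and "NSP k U1" and "NSP k U2"
    and "K = rank (U1 ** X ** transpose U2)"
    and "U1 ** X ** transpose U2 = (\<Sum>i<K. outer (b1 i) (b2 i))"
  shows "\<exists>w1 w2.
      (\<forall>i<K. l1_argmin U1 (b1 i) (w1 i) \<and> (\<forall>v. l1_argmin U1 (b1 i) v \<longrightarrow> v = w1 i)
              \<and> vec_sparse k (w1 i)) \<and>
      (\<forall>i<K. l1_argmin U2 (b2 i) (w2 i) \<and> (\<forall>v. l1_argmin U2 (b2 i) v \<longrightarrow> v = w2 i)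
              \<and> vec_sparse k (w2 i)) \<and>
      X = (\<Sum>i<K. outer (w1 i) (w2 i))"
proof -
  let ?R = "row_support X" and ?C = "row_support (transpose X)"
  have R: "card ?R \<le> k" and C: "card ?C \<le> k"
    using assms(1) card_row_support_le mat_sparse_transpose by blast+
  obtain w1 where w1: "\<forall>i<K. (\<forall>r. r \<notin> ?R \<longrightarrow> w1 i $ r = 0) \<and> U1 *v w1 i = b1 i"
    using rank_decomposition_row_supported_preimages[OF assms(4)[symmetric] assms(5)] by blast
  obtain w2 where w2: "\<forall>i<K. (\<forall>c. c \<notin> ?C \<longrightarrow> w2 i $ c = 0) \<and> U2 *v w2 i = b2 i"
    using rank_decomposition_row_supported_preimages[OF
        rank_decomposition_transpose[OF assms(4)[symmetric] assms(5)]] by blast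
  have "X = (\<Sum>i<K. outer (w1 i) (w2 i))"
  proof (rule NSP_sandwich_cancel[OF assms(2,3) R C])
    show "U1 ** X ** transpose U2 = U1 ** (\<Sum>i<K. outer (w1 i) (w2 i)) ** transpose U2"
      unfolding assms(5) using w1 w2 by (intro matrix_mult_outer_sum_preimages[symmetric]) auto
    show "row_support (\<Sum>i<K. outer (w1 i) (w2 i)) \<subseteq> ?R"
      using w1 by (intro row_support_outer_sum) auto
    show "row_support (transpose (\<Sum>i<K. outer (w1 i) (w2 i))) \<subseteq> ?C"
      using w2 by (simp only: transpose_outer_sum) (intro row_support_outer_sum, auto)
  qed auto
  moreover have "\<forall>i<K. l1_argmin U1 (b1 i) (w1 i) \<and> (\<forall>v. l1_argmin U1 (b1 i) v \<longrightarrow> v = w1 i)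
      \<and> vec_sparse k (w1 i)"
    using w1 NSP_sparse_recovery[OF assms(2) R] by blast
  moreover have "\<forall>i<K. l1_argmin U2 (b2 i) (w2 i) \<and> (\<forall>v. l1_argmin U2 (b2 i) v \<longrightarrow> v = w2 i)
      \<and> vec_sparse k (w2 i)"
    using w2 NSP_sparse_recovery[OF assms(3) C] by blast
  ultimately show ?thesis by blast
qed

end
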